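(* Let $G$ be a permutation group on a finite set $\Omega$, $|\Omega|=n$, and let $1\le k\le n$. (a) If $G$ is $k$-transitive, then $G$ has the ordered $k$-ut property. (b) If $k\ge 2$ and $G$ has ordered $k$-ut, then $G$ has ordered $(k-1)$-ut. (c) If $k\ge 2$ and $G$ has the $k$-ut property and is generously $(k-1)$-transitive, then $G$ has ordered $k$-ut. (d) If $k\ge2$ and $G$ has ordered $k$-ut, then $G$ is $(k-1)$-transitive. (e) If $k\ge2$ and $G$ has ordered $k$-ut, then $G$ is $(k-1)$-primitive. (f) If $k\ge 2$ and $G$ has ordered $k$-ut, then the stabiliser in $G$ of a point $\alpha$ has ordered $(k-1)$-ut on $\Omega\setminus\{\alpha\}$.
   Context: $G$ has the $k$-ut (universal transversal) property if for every $k$-subset $A\subseteq\Omega$ and every partition $P$ of $\Omega$ into $k$ parts there is $g\in G$ with $Ag$ a transversal of $P$ (meets every part in exactly one point). $G$ has the ordered $k$-ut property if for every $k$-tuple $(a_1,\dots,a_k)$ of distinct points and every ordered partition $(P_1,\dots,P_k)$ of $\Omega$ into $k$ nonempty parts there is $g\in G$ with $a_ig\in P_i$ for all $i$. $G$ is $m$-primitive if it is $m$-transitive and the pointwise stabiliser of any $m-1$ points is primitive on the remaining points (so $1$-primitive means primitive). $G$ is generously $m$-transitive if for every $(m+1)$-subset $M\subseteq\Omega$ the group induced on $M$ by the setwise stabiliser of $M$ is the full symmetric group on $M$. *)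

theory Defs
  imports "HOL-Combinatorics.Permutations" "HOL-Library.Disjoint_Sets"
begin

text \<open>Points are moved by function application, A g is g ` A.\<close>
definition perm_group :: "'a set \<Rightarrow> ('a \<Rightarrow> 'a) set \<Rightarrow> bool" where
  "perm_group \<Omega> G \<longleftrightarrow> (\<forall>g\<in>G. g permutes \<Omega>) \<and> id \<in> G \<and>
     (\<forall>g\<in>G. \<forall>h\<in>G. g \<circ> h \<in> G) \<and> (\<forall>g\<in>G. inv g \<in> G)"

definition distinct_tuple :: "'a set \<Rightarrow> nat \<Rightarrow> (nat \<Rightarrow> 'a) \<Rightarrow> bool" where
  "distinct_tuple \<Omega> k a \<longleftrightarrow> inj_on a {..<k} \<and> a ` {..<k} \<subseteq> \<Omega>"

definition k_transitive :: "'a set \<Rightarrow> ('a \<Rightarrow> 'a) set \<Rightarrow> nat \<Rightarrow> bool" where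
  "k_transitive \<Omega> G k \<longleftrightarrow>
     (\<forall>a b. distinct_tuple \<Omega> k a \<and> distinct_tuple \<Omega> k b \<longrightarrow>
        (\<exists>g\<in>G. \<forall>i<k. g (a i) = b i))"

definition ordered_partition :: "'a set \<Rightarrow> nat \<Rightarrow> (nat \<Rightarrow> 'a set) \<Rightarrow> bool" where
  "ordered_partition \<Omega> k P \<longleftrightarrow>
     (\<forall>i<k. P i \<noteq> {}) \<and> (\<forall>i<k. \<forall>j<k. i \<noteq> j \<longrightarrow> P i \<inter> P j = {}) \<and>
     (\<Union>i<k. P i) = \<Omega>"

definition ordered_ut :: "'a set \<Rightarrow> ('a \<Rightarrow> 'a) set \<Rightarrow> nat \<Rightarrow> bool" where
  "ordered_ut \<Omega> G k \<longleftrightarrow>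
     (\<forall>a P. distinct_tuple \<Omega> k a \<and> ordered_partition \<Omega> k P \<longrightarrow>
        (\<exists>g\<in>G. \<forall>i<k. g (a i) \<in> P i))"

definition ut :: "'a set \<Rightarrow> ('a \<Rightarrow> 'a) set \<Rightarrow> nat \<Rightarrow> bool" where
  "ut \<Omega> G k \<longleftrightarrow>
     (\<forall>A \<P>. A \<subseteq> \<Omega> \<and> card A = k \<and> partition_on \<Omega> \<P> \<and> card \<P> = k \<longrightarrow>
        (\<exists>g\<in>G. \<forall>p\<in>\<P>. card (g ` A \<inter> p) = 1))"

definition transitive_on :: "('a \<Rightarrow> 'a) set \<Rightarrow> 'a set \<Rightarrow> bool" where
  "transitive_on H \<Delta> \<longleftrightarrow> (\<forall>x\<in>\<Delta>. \<forall>y\<in>\<Delta>. \<exists>h\<in>H. h x = y)"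

definition is_block :: "('a \<Rightarrow> 'a) set \<Rightarrow> 'a set \<Rightarrow> bool" where
  "is_block H B \<longleftrightarrow> (\<forall>h\<in>H. h ` B = B \<or> h ` B \<inter> B = {})"

definition primitive_on :: "('a \<Rightarrow> 'a) set \<Rightarrow> 'a set \<Rightarrow> bool" where
  "primitive_on H \<Delta> \<longleftrightarrow> transitive_on H \<Delta> \<and>
     (\<forall>B. B \<subseteq> \<Delta> \<and> B \<noteq> {} \<and> is_block H B \<longrightarrow> card B = 1 \<or> B = \<Delta>)"

definition m_primitive :: "'a set \<Rightarrow> ('a \<Rightarrow> 'a) set \<Rightarrow> nat \<Rightarrow> bool" where
  "m_primitive \<Omega> G m \<longleftrightarrow> k_transitive \<Omega> G m \<and>
     (\<forall>c. distinct_tuple \<Omega> (m - 1) c \<longrightarrow>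
        primitive_on {g\<in>G. \<forall>i<m - 1. g (c i) = c i} (\<Omega> - c ` {..<m - 1}))"

definition generously_transitive :: "'a set \<Rightarrow> ('a \<Rightarrow> 'a) set \<Rightarrow> nat \<Rightarrow> bool" where
  "generously_transitive \<Omega> G m \<longleftrightarrow>
     (\<forall>M. M \<subseteq> \<Omega> \<and> card M = m + 1 \<longrightarrow>
        (\<forall>\<sigma>. \<sigma> permutes M \<longrightarrow> (\<exists>g\<in>G. g ` M = M \<and> (\<forall>x\<in>M. g x = \<sigma> x))))"

definition stabiliser :: "('a \<Rightarrow> 'a) set \<Rightarrow> 'a \<Rightarrow> ('a \<Rightarrow> 'a) set" where
  "stabiliser G \<alpha> = {g\<in>G. g \<alpha> = \<alpha>}"

end

theory Submission
  imports Defs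
begin

text \<open>Ordered ut for k points simulates (k-1)-transitivity: extend a (k-1)-tuple by a spare
  point and take as parts the singletons of the target tuple together with the rest of \<Omega>.
  Replacing the last parts by a block and its complement, or by a singleton {\<alpha>}, gives in
  the same way primitivity of pointwise stabilisers, ordered (k-1)-ut, and ordered ut for point
  stabilisers. Conversely, ut moves a k-set onto a transversal of the partition, and generous
  (k-1)-transitivity then reorders the k-set within itself.\<close>

abbreviation pointwise_stabiliser :: "('a \<Rightarrow> 'a) set \<Rightarrow> nat \<Rightarrow> (nat \<Rightarrow> 'a) \<Rightarrow> ('a \<Rightarrow> 'a) set" where
  "pointwise_stabiliser G m c \<equiv> {g\<in>G. \<forall>i<m. g (c i) = c i}"

lemma distinct_tuple_fun_upd:
  "distinct_tuple \<Omega> m a \<Longrightarrow> x \<in> \<Omega> \<Longrightarrow> x \<notin> a ` {..<m} \<Longrightarrow> distinct_tuple \<Omega> (Suc m) (a(m := x))"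
  unfolding distinct_tuple_def by (auto simp: lessThan_Suc inj_on_def)

lemma exists_not_in_distinct_tuple:
  assumes "finite \<Omega>" "distinct_tuple \<Omega> m a" "m < card \<Omega>"
  obtains x where "x \<in> \<Omega>" "x \<notin> a ` {..<m}"
proof -
  have "card (a ` {..<m}) = m"
    using assms(2) by (simp add: distinct_tuple_def card_image)
  then have "\<not> \<Omega> \<subseteq> a ` {..<m}"
    using assms(1,3) card_mono[of "a ` {..<m}" \<Omega>] by auto
  then show ?thesis using that by blast
qed

lemma ordered_partition_representatives:
  assumes "ordered_partition \<Omega> k P"
  obtains b where "distinct_tuple \<Omega> k b" "\<forall>i<k. b i \<in> P i"
proof -
  have "\<forall>i<k. \<exists>x. x \<in> P i"
    using assms unfolding ordered_partition_def by blast
  then obtain b where b: "\<forall>i<k. b i \<in> P i" by metis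
  have "inj_on b {..<k}"
    using b assms unfolding ordered_partition_def inj_on_def by (metis disjoint_iff lessThan_iff)
  moreover have "b ` {..<k} \<subseteq> \<Omega>"
    using b assms unfolding ordered_partition_def by blast
  ultimately show ?thesis using b that by (auto simp: distinct_tuple_def)
qed

lemma ordered_partition_fun_upd_singleton:
  "ordered_partition (\<Omega> - {y}) m P \<Longrightarrow> y \<in> \<Omega> \<Longrightarrow> ordered_partition \<Omega> (Suc m) (P(m := {y}))"
  unfolding ordered_partition_def by (auto simp: lessThan_Suc)

lemma ordered_partition_singletons_prefix:
  assumes c: "distinct_tuple \<Omega> m c" and R: "ordered_partition (\<Omega> - c ` {..<m}) r R"
  shows "ordered_partition \<Omega> (m + r) (\<lambda>i. if i < m then {c i} else R (i - m))"
    (is "ordered_partition \<Omega> (m + r) ?Q")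
proof -
  have c_inj: "inj_on c {..<m}" and c_sub: "c ` {..<m} \<subseteq> \<Omega>"
    using c by (simp_all add: distinct_tuple_def)
  have R_ne: "\<And>j. j < r \<Longrightarrow> R j \<noteq> {}"
    and R_disj: "\<And>i j. i < r \<Longrightarrow> j < r \<Longrightarrow> i \<noteq> j \<Longrightarrow> R i \<inter> R j = {}"
    and R_Un: "(\<Union>j<r. R j) = \<Omega> - c ` {..<m}"
    using R by (simp_all add: ordered_partition_def)
  have R_sub: "R j \<subseteq> \<Omega> - c ` {..<m}" if "j < r" for j
    using R_Un that by blast
  have shift: "i - m < r" if "i < m + r" "\<not> i < m" for i
    using that by arith
  have disj: "?Q i \<inter> ?Q j = {}" if "i < m + r" "j < m + r" "i \<noteq> j" for i j
  proof (cases "i < m"; cases "j < m")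
    assume "i < m" "j < m"
    then show ?thesis using c_inj \<open>i \<noteq> j\<close> by (simp add: inj_on_eq_iff)
  next
    assume "i < m" "\<not> j < m"
    then show ?thesis using R_sub[of "j - m"] shift[of j] \<open>j < m + r\<close> by auto
  next
    assume "\<not> i < m" "j < m"
    then show ?thesis using R_sub[of "i - m"] shift[of i] \<open>i < m + r\<close> by auto
  next
    assume "\<not> i < m" "\<not> j < m"
    then show ?thesis using R_disj[of "i - m" "j - m"] that by simp
  qed
  have cover: "x \<in> (\<Union>i<m + r. ?Q i)" if "x \<in> \<Omega>" for x
  proof (cases "x \<in> c ` {..<m}")
    case True
    then obtain i where "i < m" "x = c i" by blast
    then show ?thesis by (intro UN_I[of i]) auto
  next
    case False
    with that R_Un have "x \<in> (\<Union>j<r. R j)" by simp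
    then obtain j where "j < r" "x \<in> R j" by blast
    then show ?thesis by (intro UN_I[of "m + j"]) auto
  qed
  have sub: "?Q i \<subseteq> \<Omega>" if "i < m + r" for i
    using c_sub R_sub[of "i - m"] shift[of i] that by auto
  have ne: "?Q i \<noteq> {}" if "i < m + r" for i
    using R_ne[of "i - m"] shift[of i] that by auto
  have "(\<Union>i<m + r. ?Q i) = \<Omega>"
    using cover sub by (intro equalityI subsetI UN_least) auto
  then show ?thesis
    using disj ne unfolding ordered_partition_def by (intro conjI allI impI)
qed

lemma all_less_Suc_fun_upd:
  "(\<forall>i<Suc m. Q i ((a(m := x)) i)) \<longleftrightarrow> (\<forall>i<m. Q i (a i)) \<and> Q m x"
  by (auto simp: less_Suc_eq)

lemma ordered_ut_fun_updE:
  assumes "ordered_ut \<Omega> G (Suc m)" "distinct_tuple \<Omega> m a" "x \<in> \<Omega>" "x \<notin> a ` {..<m}"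
    and "ordered_partition \<Omega> (Suc m) P"
  obtains g where "g \<in> G" "\<forall>i<m. g (a i) \<in> P i" "g x \<in> P m"
proof -
  have "distinct_tuple \<Omega> (Suc m) (a(m := x))"
    using distinct_tuple_fun_upd assms(2-4) .
  then obtain g where "g \<in> G" "\<forall>i<Suc m. g ((a(m := x)) i) \<in> P i"
    using assms(1,5) unfolding ordered_ut_def by blast
  then show ?thesis using that all_less_Suc_fun_upd[where Q = "\<lambda>i v. g v \<in> P i"] by blast
qed

lemma k_transitive_imp_ordered_ut: "k_transitive \<Omega> G k \<Longrightarrow> ordered_ut \<Omega> G k"
  unfolding ordered_ut_def k_transitive_def
  by (metis ordered_partition_representatives)

lemma ordered_ut_Suc_imp_ordered_ut:
  assumes "finite \<Omega>" "ordered_ut \<Omega> G (Suc m)" "Suc m \<le> card \<Omega>"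
  shows "ordered_ut \<Omega> G m"
  unfolding ordered_ut_def
proof (intro allI impI, elim conjE)
  fix a P assume a: "distinct_tuple \<Omega> m a" and P: "ordered_partition \<Omega> m P"
  obtain b where b: "distinct_tuple \<Omega> m b" "\<forall>i<m. b i \<in> P i"
    using ordered_partition_representatives[OF P] .
  obtain y where y: "y \<in> \<Omega>" "y \<notin> b ` {..<m}"
    using exists_not_in_distinct_tuple[OF assms(1) b(1)] assms(3) by auto
  obtain x where x: "x \<in> \<Omega>" "x \<notin> a ` {..<m}"
    using exists_not_in_distinct_tuple[OF assms(1) a] assms(3) by auto
  have "ordered_partition (\<Omega> - {y}) m (\<lambda>i. P i - {y})"
    using P b y unfolding ordered_partition_def by blast
  from ordered_partition_fun_upd_singleton[OF this y(1)]
  obtain g where "g \<in> G" "\<forall>i<m. g (a i) \<in> ((\<lambda>i. P i - {y})(m := {y})) i"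
    by (rule ordered_ut_fun_updE[OF assms(2) a x])
  then show "\<exists>g\<in>G. \<forall>i<m. g (a i) \<in> P i" by auto
qed

lemma ordered_ut_Suc_imp_k_transitive:
  assumes "finite \<Omega>" "ordered_ut \<Omega> G (Suc m)" "Suc m \<le> card \<Omega>"
  shows "k_transitive \<Omega> G m"
  unfolding k_transitive_def
proof (intro allI impI, elim conjE)
  fix a b assume a: "distinct_tuple \<Omega> m a" and b: "distinct_tuple \<Omega> m b"
  obtain x where x: "x \<in> \<Omega>" "x \<notin> a ` {..<m}"
    using exists_not_in_distinct_tuple[OF assms(1) a] assms(3) by auto
  obtain y where "y \<in> \<Omega>" "y \<notin> b ` {..<m}"
    using exists_not_in_distinct_tuple[OF assms(1) b] assms(3) by auto
  then have "ordered_partition (\<Omega> - b ` {..<m}) 1 (\<lambda>_. \<Omega> - b ` {..<m})"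
    unfolding ordered_partition_def by auto
  then have "ordered_partition \<Omega> (Suc m) (\<lambda>i. if i < m then {b i} else \<Omega> - b ` {..<m})"
    using ordered_partition_singletons_prefix[OF b] by fastforce
  then obtain g where "g \<in> G" "\<forall>i<m. g (a i) \<in> (if i < m then {b i} else \<Omega> - b ` {..<m})"
    by (rule ordered_ut_fun_updE[OF assms(2) a x])
  then show "\<exists>g\<in>G. \<forall>i<m. g (a i) = b i" by auto
qed

lemma ordered_ut_Suc_imp_ordered_ut_stabiliser:
  assumes "ordered_ut \<Omega> G (Suc m)" "\<alpha> \<in> \<Omega>"
  shows "ordered_ut (\<Omega> - {\<alpha>}) (stabiliser G \<alpha>) m"
  unfolding ordered_ut_def
proof (intro allI impI, elim conjE)
  fix a P assume a: "distinct_tuple (\<Omega> - {\<alpha>}) m a" and P: "ordered_partition (\<Omega> - {\<alpha>}) m P"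
  have "distinct_tuple \<Omega> m a" "\<alpha> \<notin> a ` {..<m}"
    using a by (auto simp: distinct_tuple_def)
  then obtain g where "g \<in> G" "\<forall>i<m. g (a i) \<in> (P(m := {\<alpha>})) i" "g \<alpha> \<in> (P(m := {\<alpha>})) m"
    using ordered_ut_fun_updE[OF assms(1) _ assms(2) _ ordered_partition_fun_upd_singleton[OF P assms(2)]]
    by blast
  then show "\<exists>g\<in>stabiliser G \<alpha>. \<forall>i<m. g (a i) \<in> P i"
    by (auto simp: stabiliser_def)
qed

lemma k_transitive_Suc_imp_transitive_on_pointwise_stabiliser:
  assumes "k_transitive \<Omega> G (Suc m)" "distinct_tuple \<Omega> m c"
  shows "transitive_on (pointwise_stabiliser G m c) (\<Omega> - c ` {..<m})"
  unfolding transitive_on_def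
proof (intro ballI)
  fix x y assume "x \<in> \<Omega> - c ` {..<m}" "y \<in> \<Omega> - c ` {..<m}"
  then have "distinct_tuple \<Omega> (Suc m) (c(m := x))" "distinct_tuple \<Omega> (Suc m) (c(m := y))"
    using distinct_tuple_fun_upd[OF assms(2)] by auto
  then obtain g where g: "g \<in> G" "\<forall>i<Suc m. g ((c(m := x)) i) = (c(m := y)) i"
    using assms(1) unfolding k_transitive_def by blast
  then have "\<forall>i<m. g (c i) = c i" "g x = y"
    using all_less_Suc_fun_upd[where Q = "\<lambda>i v. g v = (c(m := y)) i"] by auto
  then show "\<exists>h\<in>pointwise_stabiliser G m c. h x = y" using g(1) by blast
qed

text \<open>A block B with two points x, y and a point outside it is refuted by an element fixing c
  that keeps x in B but moves y out of B.\<close>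
lemma ordered_ut_Suc_Suc_imp_blocks_trivial:
  assumes "ordered_ut \<Omega> G (Suc (Suc m))" "distinct_tuple \<Omega> m c"
    and B: "B \<subseteq> \<Omega> - c ` {..<m}" "B \<noteq> {}" "is_block (pointwise_stabiliser G m c) B"
  shows "card B = 1 \<or> B = \<Omega> - c ` {..<m}"
proof (rule ccontr)
  let ?\<Delta> = "\<Omega> - c ` {..<m}"
  assume nontrivial: "\<not> (card B = 1 \<or> B = ?\<Delta>)"
  obtain x y where xy: "x \<in> B" "y \<in> B" "x \<noteq> y"
    using B(2) nontrivial by (metis is_singletonI' is_singleton_altdef)
  define Q where "Q = (\<lambda>i. if i < m then {c i} else (\<lambda>j. if j = 0 then B else ?\<Delta> - B) (i - m))"
  have "B \<subset> ?\<Delta>" using B(1) nontrivial by blast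
  then have "ordered_partition ?\<Delta> 2 (\<lambda>j. if j = 0 then B else ?\<Delta> - B)"
    using B(2) unfolding ordered_partition_def by (auto simp: lessThan_Suc numeral_2_eq_2)
  from ordered_partition_singletons_prefix[OF assms(2) this]
  have P: "ordered_partition \<Omega> (Suc (Suc m)) Q"
    by (simp add: Q_def)
  have cx: "distinct_tuple \<Omega> (Suc m) (c(m := x))" "y \<notin> (c(m := x)) ` {..<Suc m}"
    using distinct_tuple_fun_upd[OF assms(2)] xy B(1) by (auto simp: lessThan_Suc)
  obtain g where g: "g \<in> G" "\<forall>i<Suc m. g ((c(m := x)) i) \<in> Q i" "g y \<in> Q (Suc m)"
    using ordered_ut_fun_updE[OF assms(1) cx(1) _ cx(2) P] xy B(1) by blast
  then have "g \<in> pointwise_stabiliser G m c" "g x \<in> B" "g y \<notin> B"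
    using all_less_Suc_fun_upd[where Q = "\<lambda>i v. g v \<in> Q i"] by (auto simp: Q_def)
  then show False
    using B(3) xy unfolding is_block_def by blast
qed

lemma ordered_ut_Suc_Suc_imp_m_primitive:
  assumes "finite \<Omega>" "ordered_ut \<Omega> G (Suc (Suc m))" "Suc (Suc m) \<le> card \<Omega>"
  shows "m_primitive \<Omega> G (Suc m)"
proof -
  have kt: "k_transitive \<Omega> G (Suc m)"
    using ordered_ut_Suc_imp_k_transitive[OF assms] .
  have "primitive_on (pointwise_stabiliser G m c) (\<Omega> - c ` {..<m})" if "distinct_tuple \<Omega> m c" for c
    unfolding primitive_on_def
    using k_transitive_Suc_imp_transitive_on_pointwise_stabiliser[OF kt that]
      ordered_ut_Suc_Suc_imp_blocks_trivial[OF assms(2) that] by blast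
  then show ?thesis
    using kt unfolding m_primitive_def by simp
qed

lemma ordered_partition_inj_on:
  assumes "ordered_partition \<Omega> k P"
  shows "inj_on P {..<k}"
proof (rule inj_onI, rule ccontr)
  fix i j assume "i \<in> {..<k}" "j \<in> {..<k}" "P i = P j" "i \<noteq> j"
  then show False using assms unfolding ordered_partition_def by (metis Int_absorb lessThan_iff)
qed

lemma ordered_partition_imp_partition_on:
  assumes "ordered_partition \<Omega> k P"
  shows "partition_on \<Omega> (P ` {..<k})"
proof (rule partition_onI)
  show "\<Union> (P ` {..<k}) = \<Omega>" "{} \<notin> P ` {..<k}"
    using assms by (auto simp: ordered_partition_def)
  fix p q assume "p \<in> P ` {..<k}" "q \<in> P ` {..<k}" "p \<noteq> q"
  then show "disjnt p q"
    using assms by (auto simp: ordered_partition_def disjnt_def)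
qed

lemma transversal_bij_betw:
  assumes P: "ordered_partition \<Omega> k P" and "M \<subseteq> \<Omega>" and one: "\<forall>i<k. card (M \<inter> P i) = 1"
  obtains r where "bij_betw r {..<k} M" "\<forall>i<k. r i \<in> P i"
proof -
  have "\<forall>i<k. \<exists>x. M \<inter> P i = {x}"
    using one by (simp add: card_1_singleton_iff)
  then obtain r where r: "\<forall>i<k. M \<inter> P i = {r i}" by metis
  have disj: "\<And>i j. i < k \<Longrightarrow> j < k \<Longrightarrow> i \<noteq> j \<Longrightarrow> P i \<inter> P j = {}"
    and cover: "(\<Union>i<k. P i) = \<Omega>"
    using P by (simp_all add: ordered_partition_def)
  have "inj_on r {..<k}"
  proof (rule inj_onI)
    fix i j assume "i \<in> {..<k}" "j \<in> {..<k}" "r i = r j"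
    then have "r i \<in> P i \<inter> P j" using r by blast
    then show "i = j" using disj \<open>i \<in> {..<k}\<close> \<open>j \<in> {..<k}\<close> by blast
  qed
  moreover have "r ` {..<k} = M"
  proof
    show "r ` {..<k} \<subseteq> M" using r by blast
    show "M \<subseteq> r ` {..<k}"
    proof
      fix x assume "x \<in> M"
      then obtain i where "i < k" "x \<in> P i" using cover \<open>M \<subseteq> \<Omega>\<close> by blast
      then show "x \<in> r ` {..<k}" using r \<open>x \<in> M\<close> by blast
    qed
  qed
  ultimately show ?thesis using that r by (auto simp: bij_betw_def)
qed

lemma generously_transitive_realises_bij_betw:
  assumes gt: "generously_transitive \<Omega> G m" and "M \<subseteq> \<Omega>"
    and b: "bij_betw b {..<Suc m} M" and r: "bij_betw r {..<Suc m} M"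
  obtains h where "h \<in> G" "\<forall>i<Suc m. h (b i) = r i"
proof -
  define \<sigma> where "\<sigma> = (\<lambda>x. if x \<in> M then r (inv_into {..<Suc m} b x) else x)"
  have "bij_betw (r \<circ> inv_into {..<Suc m} b) M M"
    using bij_betw_trans[OF bij_betw_inv_into[OF b] r] .
  then have "bij_betw \<sigma> M M"
    by (rule bij_betw_cong[THEN iffD1, rotated]) (simp add: \<sigma>_def)
  then have "\<sigma> permutes M"
    by (rule bij_imp_permutes) (simp add: \<sigma>_def)
  moreover have "card M = m + 1"
    using bij_betw_same_card[OF b] by simp
  ultimately obtain h where "h \<in> G" "\<forall>x\<in>M. h x = \<sigma> x"
    using gt \<open>M \<subseteq> \<Omega>\<close> unfolding generously_transitive_def by blast
  moreover have "\<forall>i<Suc m. b i \<in> M \<and> \<sigma> (b i) = r i"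
    using b by (auto simp: \<sigma>_def bij_betw_def inv_into_f_f)
  ultimately show ?thesis using that by metis
qed

lemma ut_generously_transitive_imp_ordered_ut:
  assumes ut: "ut \<Omega> G (Suc m)" and gt: "generously_transitive \<Omega> G m" and pg: "perm_group \<Omega> G"
  shows "ordered_ut \<Omega> G (Suc m)"
  unfolding ordered_ut_def
proof (intro allI impI, elim conjE)
  fix a P assume a: "distinct_tuple \<Omega> (Suc m) a" and P: "ordered_partition \<Omega> (Suc m) P"
  have "card (a ` {..<Suc m}) = Suc m" "card (P ` {..<Suc m}) = Suc m"
    using a ordered_partition_inj_on[OF P] by (simp_all add: distinct_tuple_def card_image)
  then obtain g where g: "g \<in> G" "\<forall>i<Suc m. card (g ` a ` {..<Suc m} \<inter> P i) = 1"
    using ut ordered_partition_imp_partition_on[OF P] a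
    unfolding ut_def distinct_tuple_def by (metis (no_types, lifting) image_eqI lessThan_iff)
  have "g permutes \<Omega>" using pg g(1) unfolding perm_group_def by blast
  then have ga: "bij_betw (g \<circ> a) {..<Suc m} (g ` a ` {..<Suc m})" "g ` a ` {..<Suc m} \<subseteq> \<Omega>"
    using a unfolding distinct_tuple_def
    by (auto simp: bij_betw_def image_comp permutes_in_image
        intro!: comp_inj_on inj_on_subset[OF permutes_inj_on])
  obtain r where r: "bij_betw r {..<Suc m} (g ` a ` {..<Suc m})" "\<forall>i<Suc m. r i \<in> P i"
    using transversal_bij_betw[OF P ga(2) g(2)] .
  obtain h where "h \<in> G" "\<forall>i<Suc m. h (g (a i)) = r i"
    using generously_transitive_realises_bij_betw[OF gt ga(2) ga(1) r(1)] by auto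
  moreover have "h \<circ> g \<in> G" using pg \<open>h \<in> G\<close> g(1) unfolding perm_group_def by blast
  ultimately show "\<exists>g\<in>G. \<forall>i<Suc m. g (a i) \<in> P i" using r(2) by (metis comp_apply)
qed

theorem proposition2p1:
  fixes \<Omega> :: "'a set" and G :: "('a \<Rightarrow> 'a) set" and k :: nat
  assumes "finite \<Omega>" and "perm_group \<Omega> G" and "1 \<le> k" and "k \<le> card \<Omega>"
  shows "(k_transitive \<Omega> G k \<longrightarrow> ordered_ut \<Omega> G k)
    \<and> (k \<ge> 2 \<and> ordered_ut \<Omega> G k \<longrightarrow> ordered_ut \<Omega> G (k - 1))
    \<and> (k \<ge> 2 \<and> ut \<Omega> G k \<and> generously_transitive \<Omega> G (k - 1) \<longrightarrow> ordered_ut \<Omega> G k)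
    \<and> (k \<ge> 2 \<and> ordered_ut \<Omega> G k \<longrightarrow> k_transitive \<Omega> G (k - 1))
    \<and> (k \<ge> 2 \<and> ordered_ut \<Omega> G k \<longrightarrow> m_primitive \<Omega> G (k - 1))
    \<and> (k \<ge> 2 \<and> ordered_ut \<Omega> G k \<longrightarrow>
         (\<forall>\<alpha>\<in>\<Omega>. ordered_ut (\<Omega> - {\<alpha>}) (stabiliser G \<alpha>) (k - 1)))"
proof -
  obtain m where k: "k = Suc m" using assms(3) by (cases k) auto
  have primitive: "m_primitive \<Omega> G (k - 1)" if "k \<ge> 2" "ordered_ut \<Omega> G k"
  proof -
    obtain n where "k = Suc (Suc n)" using \<open>k \<ge> 2\<close> by (metis add_2_eq_Suc le_Suc_ex)
    then show ?thesis using ordered_ut_Suc_Suc_imp_m_primitive assms(1,4) that(2) by simp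
  qed
  show ?thesis
    using k_transitive_imp_ordered_ut primitive
      ordered_ut_Suc_imp_ordered_ut[OF assms(1), of G m]
      ut_generously_transitive_imp_ordered_ut[of \<Omega> G m, OF _ _ assms(2)]
      ordered_ut_Suc_imp_k_transitive[OF assms(1), of G m]
      ordered_ut_Suc_imp_ordered_ut_stabiliser[of \<Omega> G m]
    unfolding k using assms(4) k by auto
qed

end
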